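(* Let $F$ be a field of characteristic different from $2$ and $3$, let $A$ be the free associative $F$-algebra without unity on free generators $x,y$, let $I$ be the two-sided ideal of $A$ generated by the following elements: (i) all monomials of degree $8$; (ii) all monomials of degree greater than $2$ in $x$; (iii) all monic monomials of degree $7$ except $yxy^3xy$ and $y^2xyxy^2$; (iv) all monic monomials of degree less than $7$ which do not divide either of the monomials $yxy^3xy$ and $y^2xyxy^2$; (v) the polynomial $2xy^3xy-5yxyxy^2-2yxy^3x+5y^2xyxy$; (vi) the polynomial $2yxy^3xy-5y^2xyxy^2$; let $B=A/I$, and let $B_1=F\oplus B$ be the unital hull of $B$. Then the Lie algebra $[B_1]$ is $5$-Engel but the group of units $U(B_1)$ is not $5$-Engel.
   Context: For monic monomials $m,n$ in $x,y$, $m$ divides $n$ if $n=m_1 m m_2$ for some monic monomials $m_1,m_2$ (possibly equal to $1$). The unital hull $B_1=F\oplus B$ is the direct sum of vector spaces with multiplication $(\lambda+u)(\mu+v)=\lambda\mu+(\lambda v+\mu u+uv)$, so $1\in F$ is its unity. For an associative algebra $R$, $[R]$ is the Lie algebra with bracket $[a,b]=ab-ba$ and $U(R)$ is its group of units. Set $[x,{}_{(1)}y]=[x,y]$, $[x,{}_{(k+1)}y]=[[x,{}_{(k)}y],y]$; a Lie algebra is $n$-Engel if $[u,{}_{(n)}v]=0$ for all $u,v$. For a group, $(x,y)=x^{-1}y^{-1}xy$, $(x,{}_{(k+1)}y)=((x,{}_{(k)}y),y)$; a group is $n$-Engel if $(u,{}_{(n)}v)=1$ for all $u,v$. *)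

theory Defs
  imports "HOL-Algebra.Ring"
begin

datatype gen = X | Y

text \<open>A noncommutative polynomial over F is a coefficient function on words
  (monic monomials) in the letters X, Y; the empty word is the monomial 1.\<close>
type_synonym 'a ncpoly = "gen list \<Rightarrow> 'a"

definition ncp_zero :: "'a::field ncpoly" where
  "ncp_zero = (\<lambda>w. 0)"

definition ncp_add :: "'a::field ncpoly \<Rightarrow> 'a ncpoly \<Rightarrow> 'a ncpoly" where
  "ncp_add p q = (\<lambda>w. p w + q w)"

definition ncp_smult :: "'a::field \<Rightarrow> 'a ncpoly \<Rightarrow> 'a ncpoly" where
  "ncp_smult c p = (\<lambda>w. c * p w)"

definition ncp_mult :: "'a::field ncpoly \<Rightarrow> 'a ncpoly \<Rightarrow> 'a ncpoly" where
  "ncp_mult p q = (\<lambda>w. \<Sum>i\<le>length w. p (take i w) * q (drop i w))"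

definition mono :: "gen list \<Rightarrow> 'a::field ncpoly" where
  "mono u = (\<lambda>w. if w = u then 1 else 0)"

definition free_alg :: "'a::field ncpoly set" where
  "free_alg = {p. finite {w. p w \<noteq> 0} \<and> p [] = 0}"

inductive_set ideal_gen :: "'a::field ncpoly set \<Rightarrow> 'a ncpoly set" for G where
  gen: "g \<in> G \<Longrightarrow> g \<in> ideal_gen G"
| zero: "ncp_zero \<in> ideal_gen G"
| add: "p \<in> ideal_gen G \<Longrightarrow> q \<in> ideal_gen G \<Longrightarrow> ncp_add p q \<in> ideal_gen G"
| smult: "p \<in> ideal_gen G \<Longrightarrow> ncp_smult c p \<in> ideal_gen G"
| lmult: "p \<in> ideal_gen G \<Longrightarrow> a \<in> free_alg \<Longrightarrow> ncp_mult a p \<in> ideal_gen G"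
| rmult: "p \<in> ideal_gen G \<Longrightarrow> a \<in> free_alg \<Longrightarrow> ncp_mult p a \<in> ideal_gen G"

definition mdvd :: "gen list \<Rightarrow> gen list \<Rightarrow> bool" where
  "mdvd m n \<longleftrightarrow> (\<exists>m1 m2. n = m1 @ m @ m2)"

definition w1 :: "gen list" where "w1 = [Y, X, Y, Y, Y, X, Y]"
definition w2 :: "gen list" where "w2 = [Y, Y, X, Y, X, Y, Y]"

definition rel_v :: "'a::field ncpoly" where
  "rel_v = (\<lambda>w. 2 * mono [X, Y, Y, Y, X, Y] w - 5 * mono [Y, X, Y, X, Y, Y] w
              - 2 * mono [Y, X, Y, Y, Y, X] w + 5 * mono [Y, Y, X, Y, X, Y] w)"

definition rel_vi :: "'a::field ncpoly" where
  "rel_vi = (\<lambda>w. 2 * mono w1 w - 5 * mono w2 w)"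

definition gens :: "'a::field ncpoly set" where
  "gens =
     {mono w | w. length w = 8}
   \<union> {mono w | w. length (filter (\<lambda>g. g = X) w) > 2}
   \<union> {mono w | w. length w = 7 \<and> w \<noteq> w1 \<and> w \<noteq> w2}
   \<union> {mono w | w. 1 \<le> length w \<and> length w < 7 \<and> \<not> mdvd w w1 \<and> \<not> mdvd w w2}
   \<union> {rel_v, rel_vi}"

definition I_ideal :: "'a::field ncpoly set" where
  "I_ideal = ideal_gen gens"

text \<open>Representatives: pairs (lambda, p) with p in A; (lambda, p) represents lambda + (p + I).\<close>
definition hull_reps :: "('a::field \<times> 'a ncpoly) set" where
  "hull_reps = UNIV \<times> free_alg"

definition hull_rel :: "(('a::field \<times> 'a ncpoly) \<times> ('a \<times> 'a ncpoly)) set" where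
  "hull_rel = {(r, s). r \<in> hull_reps \<and> s \<in> hull_reps \<and> fst r = fst s
                 \<and> ncp_add (snd r) (ncp_smult (-1) (snd s)) \<in> I_ideal}"

definition hull_add :: "'a::field \<times> 'a ncpoly \<Rightarrow> 'a \<times> 'a ncpoly \<Rightarrow> 'a \<times> 'a ncpoly" where
  "hull_add r s = (fst r + fst s, ncp_add (snd r) (snd s))"

text \<open>(lambda + u)(mu + v) = lambda mu + (lambda v + mu u + u v)\<close>
definition hull_mult :: "'a::field \<times> 'a ncpoly \<Rightarrow> 'a \<times> 'a ncpoly \<Rightarrow> 'a \<times> 'a ncpoly" where
  "hull_mult r s = (fst r * fst s,
     ncp_add (ncp_add (ncp_smult (fst r) (snd s)) (ncp_smult (fst s) (snd r)))
             (ncp_mult (snd r) (snd s)))"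

definition B1 :: "('a::field \<times> 'a ncpoly) set ring" where
  "B1 = \<lparr> carrier = hull_reps // hull_rel,
          mult = (\<lambda>U V. \<Union>r\<in>U. \<Union>s\<in>V. hull_rel `` {hull_mult r s}),
          one = hull_rel `` {(1, ncp_zero)},
          zero = hull_rel `` {(0, ncp_zero)},
          add = (\<lambda>U V. \<Union>r\<in>U. \<Union>s\<in>V. hull_rel `` {hull_add r s}) \<rparr>"

definition lie_bracket :: "('b, 'm) ring_scheme \<Rightarrow> 'b \<Rightarrow> 'b \<Rightarrow> 'b" where
  "lie_bracket R a b = (a \<otimes>\<^bsub>R\<^esub> b) \<ominus>\<^bsub>R\<^esub> (b \<otimes>\<^bsub>R\<^esub> a)"

fun lie_iter :: "('b, 'm) ring_scheme \<Rightarrow> nat \<Rightarrow> 'b \<Rightarrow> 'b \<Rightarrow> 'b" where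
  "lie_iter R 0 a b = a"
| "lie_iter R (Suc k) a b = lie_bracket R (lie_iter R k a b) b"

definition lie_engel :: "('b, 'm) ring_scheme \<Rightarrow> nat \<Rightarrow> bool" where
  "lie_engel R n \<longleftrightarrow> (\<forall>u\<in>carrier R. \<forall>v\<in>carrier R. lie_iter R n u v = \<zero>\<^bsub>R\<^esub>)"

definition grp_comm :: "('b, 'm) monoid_scheme \<Rightarrow> 'b \<Rightarrow> 'b \<Rightarrow> 'b" where
  "grp_comm G a b = inv\<^bsub>G\<^esub> a \<otimes>\<^bsub>G\<^esub> inv\<^bsub>G\<^esub> b \<otimes>\<^bsub>G\<^esub> a \<otimes>\<^bsub>G\<^esub> b"

fun grp_comm_iter :: "('b, 'm) monoid_scheme \<Rightarrow> nat \<Rightarrow> 'b \<Rightarrow> 'b \<Rightarrow> 'b" where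
  "grp_comm_iter G 0 a b = a"
| "grp_comm_iter G (Suc k) a b = grp_comm G (grp_comm_iter G k a b) b"

definition group_engel :: "('b, 'm) monoid_scheme \<Rightarrow> nat \<Rightarrow> bool" where
  "group_engel G n \<longleftrightarrow> (\<forall>u\<in>carrier G. \<forall>v\<in>carrier G. grp_comm_iter G n u v = \<one>\<^bsub>G\<^esub>)"

end

theory Submission
  imports Defs "HOL-Library.Sublist"
begin

text \<open>Every monomial that is not a nonempty divisor of \<open>w1\<close> or \<open>w2\<close> lies in \<open>I\<close>, so a polynomial of
  the free algebra lies in \<open>I\<close> iff on these 28 surviving words it agrees with a linear combination
  of the relations (v) and (vi). Scalars drop out of Lie brackets in \<open>B\<^sub>1\<close>, and for \<open>p, q\<close> without
  constant term the coefficients of \<open>[p, q, q, q, q, q]\<close> on the monomials of (v) and on \<open>w1, w2\<close>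
  come out proportional to those of (v) and (vi); hence \<open>[B\<^sub>1]\<close> is 5-Engel. On the other hand
  \<open>1 + x\<close> and \<open>1 + y\<close> are units, and computing in \<open>B\<^sub>1\<close> gives
  \<open>(1 + x, 1 + y, 1 + y, 1 + y, 1 + y, 1 + y) = 1 + 6 y\<^sup>2xyxy\<^sup>2\<close>, whose coefficients \<open>0, 6\<close> on
  \<open>w1, w2\<close> are not proportional to \<open>2, -5\<close> when \<open>6 \<noteq> 0\<close>.\<close>
section \<open>Arithmetic of noncommutative polynomials\<close>

lemma ncp_mult_Nil [simp]: "ncp_mult p q [] = p [] * q []"
  by (simp add: ncp_mult_def)

lemma ncp_mult_Cons: "ncp_mult p q (c # w) = p [] * q (c # w) + ncp_mult (\<lambda>u. p (c # u)) q w"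
  unfolding ncp_mult_def length_Cons by (subst sum.atMost_Suc_shift) simp

lemma ncp_mult_add_left: "ncp_mult (\<lambda>w. p w + q w) r = (\<lambda>w. ncp_mult p r w + ncp_mult q r w)"
  by (rule ext) (simp add: ncp_mult_def distrib_right sum.distrib)

lemma ncp_mult_add_right: "ncp_mult r (\<lambda>w. p w + q w) = (\<lambda>w. ncp_mult r p w + ncp_mult r q w)"
  by (rule ext) (simp add: ncp_mult_def distrib_left sum.distrib)

lemma ncp_mult_diff_left: "ncp_mult (\<lambda>w. p w - q w) r = (\<lambda>w. ncp_mult p r w - ncp_mult q r w)"
  by (rule ext) (simp add: ncp_mult_def left_diff_distrib sum_subtractf)

lemma ncp_mult_diff_right: "ncp_mult r (\<lambda>w. p w - q w) = (\<lambda>w. ncp_mult r p w - ncp_mult r q w)"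
  by (rule ext) (simp add: ncp_mult_def right_diff_distrib sum_subtractf)

lemma ncp_mult_smult_left: "ncp_mult (\<lambda>w. c * p w) q = (\<lambda>w. c * ncp_mult p q w)"
  by (rule ext) (simp add: ncp_mult_def sum_distrib_left mult.assoc)

lemma ncp_mult_smult_right: "ncp_mult p (\<lambda>w. c * q w) = (\<lambda>w. c * ncp_mult p q w)"
  by (rule ext) (simp add: ncp_mult_def sum_distrib_left algebra_simps)

lemma ncp_mult_zero_left [simp]: "ncp_mult (\<lambda>w. 0) q = (\<lambda>w. 0)"
  by (rule ext) (simp add: ncp_mult_def)

lemma ncp_mult_zero_right [simp]: "ncp_mult p (\<lambda>w. 0) = (\<lambda>w. 0)"
  by (rule ext) (simp add: ncp_mult_def)

lemma ncp_mult_assoc: "ncp_mult (ncp_mult p q) r = ncp_mult p (ncp_mult q r)"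
proof (rule ext)
  fix w show "ncp_mult (ncp_mult p q) r w = ncp_mult p (ncp_mult q r) w"
  proof (induction w arbitrary: p)
    case Nil
    then show ?case by simp
  next
    case (Cons c w)
    have "ncp_mult (ncp_mult p q) r (c # w) = p [] * q [] * r (c # w) +
        ncp_mult (\<lambda>u. p [] * q (c # u) + ncp_mult (\<lambda>u. p (c # u)) q u) r w"
      by (simp add: ncp_mult_Cons)
    also have "\<dots> = p [] * q [] * r (c # w) + p [] * ncp_mult (\<lambda>u. q (c # u)) r w
        + ncp_mult (ncp_mult (\<lambda>u. p (c # u)) q) r w"
      by (simp add: ncp_mult_add_left ncp_mult_smult_left)
    also have "\<dots> = ncp_mult p (ncp_mult q r) (c # w)"
      by (simp add: ncp_mult_Cons Cons.IH algebra_simps)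
    finally show ?case .
  qed
qed

lemmas ncp_mult_linear = ncp_mult_add_left ncp_mult_add_right ncp_mult_smult_left
  ncp_mult_smult_right ncp_mult_assoc

lemma ncp_mult_mono: "ncp_mult (mono u) (mono v) = (mono (u @ v) :: 'a::field ncpoly)"
proof (rule ext)
  fix w
  show "ncp_mult (mono u) (mono v) w = (mono (u @ v) w :: 'a)"
  proof (cases "w = u @ v")
    case True
    have "(\<Sum>i\<le>length w. (mono u (take i w) :: 'a) * mono v (drop i w)) =
        (\<Sum>i\<in>{length u}. (mono u (take i w) :: 'a) * mono v (drop i w))"
    proof (rule sum.mono_neutral_right)
      show "\<forall>i\<in>{..length w} - {length u}. (mono u (take i w) :: 'a) * mono v (drop i w) = 0"
      proof
        fix i assume "i \<in> {..length w} - {length u}"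
        then have "take i w \<noteq> u" by auto
        then show "(mono u (take i w) :: 'a) * mono v (drop i w) = 0" by (simp add: mono_def)
      qed
    qed (auto simp: True)
    then show ?thesis by (simp add: ncp_mult_def mono_def True)
  next
    case False
    then have z: "(mono u (take i w) :: 'a) * mono v (drop i w) = 0" for i
      by (auto simp: mono_def)
    have "ncp_mult (mono u) (mono v) w = (0::'a)"
      unfolding ncp_mult_def by (simp only: z sum.neutral_const)
    then show ?thesis using False by (simp add: mono_def)
  qed
qed

definition vanishes_below :: "nat \<Rightarrow> 'a::field ncpoly \<Rightarrow> bool" where
  "vanishes_below n p \<longleftrightarrow> (\<forall>w. length w < n \<longrightarrow> p w = 0)"

lemma vanishes_below_ncp_mult:
  assumes "vanishes_below m p" "vanishes_below n q"
  shows "vanishes_below (m + n) (ncp_mult p q)"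
  unfolding vanishes_below_def
proof (intro allI impI)
  fix w :: "gen list" assume short: "length w < m + n"
  have "p (take i w) * q (drop i w) = 0" if "i \<le> length w" for i
  proof (cases "i < m")
    case True then show ?thesis using assms(1) that by (simp add: vanishes_below_def)
  next
    case False then have "length (drop i w) < n" using short that by simp
    then show ?thesis using assms(2) by (simp add: vanishes_below_def)
  qed
  then show "ncp_mult p q w = 0" by (auto simp: ncp_mult_def intro!: sum.neutral)
qed

lemma free_alg_zero [simp]: "(\<lambda>w. 0) \<in> free_alg"
  by (simp add: free_alg_def)

lemma free_alg_add: "p \<in> free_alg \<Longrightarrow> q \<in> free_alg \<Longrightarrow> (\<lambda>w. p w + q w) \<in> free_alg"
  unfolding free_alg_def
  by (auto intro: finite_subset[of _ "{w. p w \<noteq> 0} \<union> {w. q w \<noteq> 0}"])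

lemma free_alg_smult: "p \<in> free_alg \<Longrightarrow> (\<lambda>w. c * p w) \<in> free_alg"
  unfolding free_alg_def by (auto intro: finite_subset[of _ "{w. p w \<noteq> 0}"])

lemma free_alg_uminus: "p \<in> free_alg \<Longrightarrow> (\<lambda>w. - p w) \<in> free_alg"
  using free_alg_smult[of p "-1"] by simp

lemma free_alg_diff: "p \<in> free_alg \<Longrightarrow> q \<in> free_alg \<Longrightarrow> (\<lambda>w. p w - q w) \<in> free_alg"
  using free_alg_add[OF _ free_alg_uminus[of q]] by simp

lemma free_alg_ncp_mult:
  assumes "p \<in> free_alg" "q \<in> free_alg"
  shows "ncp_mult p q \<in> free_alg"
proof -
  have "{w. ncp_mult p q w \<noteq> 0} \<subseteq> (\<lambda>(u, v). u @ v) ` ({u. p u \<noteq> 0} \<times> {v. q v \<noteq> 0})"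
  proof
    fix w assume "w \<in> {w. ncp_mult p q w \<noteq> 0}"
    then have "(\<Sum>i\<le>length w. p (take i w) * q (drop i w)) \<noteq> 0" by (simp add: ncp_mult_def)
    then obtain i where "p (take i w) * q (drop i w) \<noteq> 0" by (meson sum.neutral)
    then show "w \<in> (\<lambda>(u, v). u @ v) ` ({u. p u \<noteq> 0} \<times> {v. q v \<noteq> 0})"
      by (intro image_eqI[of _ _ "(take i w, drop i w)"]) auto
  qed
  then show ?thesis
    using assms by (auto simp: free_alg_def intro: finite_subset)
qed

lemmas free_alg_closed = free_alg_add free_alg_smult free_alg_uminus free_alg_diff free_alg_ncp_mult

lemma mono_in_free_alg [simp]: "w \<noteq> [] \<Longrightarrow> mono w \<in> free_alg"
  by (simp add: free_alg_def mono_def)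

lemma free_alg_Nil: "p \<in> free_alg \<Longrightarrow> p [] = 0"
  by (simp add: free_alg_def)

section \<open>The surviving monomials\<close>

definition surviving :: "gen list \<Rightarrow> bool" where
  "surviving w \<longleftrightarrow> w \<noteq> [] \<and> (mdvd w w1 \<or> mdvd w w2)"

definition surviving_words :: "gen list list" where
  "surviving_words = remdups (filter (\<lambda>w. w \<noteq> []) (sublists w1 @ sublists w2))"

definition v1 :: "gen list" where "v1 = [X, Y, Y, Y, X, Y]"
definition v2 :: "gen list" where "v2 = [Y, X, Y, X, Y, Y]"
definition v3 :: "gen list" where "v3 = [Y, X, Y, Y, Y, X]"
definition v4 :: "gen list" where "v4 = [Y, Y, X, Y, X, Y]"

lemma mdvd_eq_sublist: "mdvd = sublist"
  by (intro ext) (simp add: mdvd_def sublist_def)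

lemma surviving_iff_mem: "surviving w \<longleftrightarrow> w \<in> set surviving_words"
  by (auto simp: surviving_def surviving_words_def mdvd_eq_sublist)

lemma surviving_words_shape:
  "list_all (\<lambda>w. length w \<le> 7 \<and> length (filter (\<lambda>g. g = X) w) \<le> 2 \<and>
     (length w = 6 \<longrightarrow> w \<in> {v1, v2, v3, v4}) \<and> (length w = 7 \<longrightarrow> w \<in> {w1, w2})) surviving_words"
  by code_simp

lemma surviving_length: "surviving w \<Longrightarrow> length w \<le> 7"
  using surviving_words_shape by (auto simp: surviving_iff_mem list_all_iff)

lemma surviving_count_X: "surviving w \<Longrightarrow> length (filter (\<lambda>g. g = X) w) \<le> 2"
  using surviving_words_shape by (auto simp: surviving_iff_mem list_all_iff)

lemma surviving_length_6: "surviving w \<Longrightarrow> length w = 6 \<Longrightarrow> w \<in> {v1, v2, v3, v4}"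
  using surviving_words_shape by (auto simp: surviving_iff_mem list_all_iff)

lemma surviving_length_7: "surviving w \<Longrightarrow> length w = 7 \<Longrightarrow> w \<in> {w1, w2}"
  using surviving_words_shape by (auto simp: surviving_iff_mem list_all_iff)

lemma surviving_relation_words: "surviving v1" "surviving v2" "surviving v3" "surviving v4"
    "surviving w1" "surviving w2"
  unfolding surviving_iff_mem by code_simp+

lemma surviving_take: "surviving w \<Longrightarrow> take i w \<noteq> [] \<Longrightarrow> surviving (take i w)"
  unfolding surviving_def mdvd_eq_sublist by (meson sublist_order.order_trans sublist_take)

lemma surviving_drop: "surviving w \<Longrightarrow> drop i w \<noteq> [] \<Longrightarrow> surviving (drop i w)"
  unfolding surviving_def mdvd_eq_sublist by (meson sublist_order.order_trans sublist_drop)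
section \<open>Membership in the ideal\<close>

definition in_relation_span :: "'a::field ncpoly \<Rightarrow> bool" where
  "in_relation_span p \<longleftrightarrow> (\<exists>s t. \<forall>w. surviving w \<longrightarrow> p w = s * rel_v w + t * rel_vi w)"

lemma rel_v_apply:
  "rel_v w = (if w = v1 then 2 else if w = v2 then -5 else if w = v3 then -2 else if w = v4 then 5 else 0)"
  by (simp add: rel_v_def mono_def v1_def v2_def v3_def v4_def)

lemma rel_vi_apply: "rel_vi w = (if w = w1 then 2 else if w = w2 then -5 else 0)"
  by (simp add: rel_vi_def mono_def w1_def w2_def)

lemma rel_v_short: "length w \<le> 5 \<Longrightarrow> rel_v w = 0"
  by (auto simp: rel_v_apply v1_def v2_def v3_def v4_def)

lemma rel_vi_short: "length w \<le> 5 \<Longrightarrow> rel_vi w = 0"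
  by (auto simp: rel_vi_apply w1_def w2_def)

lemma rel_v_rel_vi_coeffs:
  "rel_v v1 = 2" "rel_v v2 = -5" "rel_v v3 = -2" "rel_v v4 = 5" "rel_v w1 = 0" "rel_v w2 = 0"
  "rel_vi v1 = 0" "rel_vi v2 = 0" "rel_vi v3 = 0" "rel_vi v4 = 0" "rel_vi w1 = 2" "rel_vi w2 = -5"
  by (simp_all add: rel_v_apply rel_vi_apply v1_def v2_def v3_def v4_def w1_def w2_def)

lemma in_relation_span_short:
  "in_relation_span p \<Longrightarrow> surviving w \<Longrightarrow> length w \<le> 5 \<Longrightarrow> p w = 0"
  by (auto simp: in_relation_span_def rel_v_short rel_vi_short)

lemma in_relation_span_zero: "in_relation_span (\<lambda>w. 0)"
  unfolding in_relation_span_def by (rule exI[of _ 0], rule exI[of _ 0]) simp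

lemma in_relation_span_add:
  assumes "in_relation_span p" "in_relation_span q"
  shows "in_relation_span (\<lambda>w. p w + q w)"
proof -
  obtain s t s' t' where "\<forall>w. surviving w \<longrightarrow> p w = s * rel_v w + t * rel_vi w"
    and "\<forall>w. surviving w \<longrightarrow> q w = s' * rel_v w + t' * rel_vi w"
    using assms by (auto simp: in_relation_span_def)
  then have "\<forall>w. surviving w \<longrightarrow> p w + q w = (s + s') * rel_v w + (t + t') * rel_vi w"
    by (simp add: algebra_simps)
  then show ?thesis unfolding in_relation_span_def by blast
qed

lemma in_relation_span_smult:
  assumes "in_relation_span p"
  shows "in_relation_span (\<lambda>w. c * p w)"
proof -
  obtain s t where "\<forall>w. surviving w \<longrightarrow> p w = s * rel_v w + t * rel_vi w"
    using assms by (auto simp: in_relation_span_def)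
  then have "\<forall>w. surviving w \<longrightarrow> c * p w = (c * s) * rel_v w + (c * t) * rel_vi w"
    by (simp add: algebra_simps)
  then show ?thesis unfolding in_relation_span_def by blast
qed

lemma ncp_mult_surviving_left:
  assumes "a [] = 0" "p [] = 0" "\<And>u. surviving u \<Longrightarrow> length u \<le> 5 \<Longrightarrow> p u = 0" "surviving w"
  shows "ncp_mult a p w = (if length w = 7 then a (take 1 w) * p (drop 1 w) else 0)"
proof -
  define c where "c = (if length w = 7 then a (take 1 w) * p (drop 1 w) else 0)"
  have "a (take i w) * p (drop i w) = (if i = 1 then c else 0)" for i
  proof (cases "i = 0 \<or> drop i w = []")
    case True then show ?thesis using assms(1,2) by (auto simp: c_def)
  next
    case False
    then have "surviving (drop i w)" using surviving_drop[OF assms(4)] by blast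
    then show ?thesis using False assms(3) surviving_length[OF assms(4)] by (auto simp: c_def)
  qed
  moreover have "1 \<le> length w" using assms(4) by (simp add: surviving_def Suc_le_eq)
  ultimately show ?thesis unfolding ncp_mult_def c_def[symmetric] by simp
qed

lemma ncp_mult_surviving_right:
  assumes "a [] = 0" "p [] = 0" "\<And>u. surviving u \<Longrightarrow> length u \<le> 5 \<Longrightarrow> p u = 0" "surviving w"
  shows "ncp_mult p a w = (if length w = 7 then p (take 6 w) * a (drop 6 w) else 0)"
proof -
  define c where "c = (if length w = 7 then p (take 6 w) * a (drop 6 w) else 0)"
  have "w \<noteq> []" using assms(4) by (simp add: surviving_def)
  have "p (take i w) * a (drop i w) = (if i = 6 then c else 0)" for i
  proof (cases "i = 0 \<or> length w \<le> i")
    case True then show ?thesis using assms(1,2) by (auto simp: c_def)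
  next
    case False
    then have "surviving (take i w)" using surviving_take[OF assms(4)] \<open>w \<noteq> []\<close> by simp
    then show ?thesis using False assms(3) surviving_length[OF assms(4)] by (auto simp: c_def)
  qed
  moreover have "c = 0" if "length w < 6" using that by (simp add: c_def)
  ultimately show ?thesis unfolding ncp_mult_def c_def[symmetric] by auto
qed

text \<open>Since \<open>w1 = y v1 = v3 y\<close> and \<open>w2 = y v2 = v4 y\<close>, multiplying by a letter turns the
  coefficients of (v) into a multiple of those of (vi).\<close>

lemma in_relation_span_ncp_mult_left:
  assumes "a \<in> free_alg" "p \<in> free_alg" "in_relation_span p"
  shows "in_relation_span (ncp_mult a p)"
proof -
  obtain s t where p: "\<And>w. surviving w \<Longrightarrow> p w = s * rel_v w + t * rel_vi w"
    using assms(3) by (auto simp: in_relation_span_def)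
  have "ncp_mult a p w = 0 * rel_v w + (a [Y] * s) * rel_vi w" if "surviving w" for w
  proof -
    have "ncp_mult a p w = (if length w = 7 then a (take 1 w) * p (drop 1 w) else 0)"
      using assms that
      by (intro ncp_mult_surviving_left) (simp_all add: free_alg_Nil in_relation_span_short)
    then show ?thesis
      using surviving_length_7[OF that] p[OF surviving_relation_words(1)] p[OF surviving_relation_words(2)]
      by (auto simp: rel_vi_apply rel_v_apply w1_def w2_def v1_def v2_def v3_def v4_def
          algebra_simps)
  qed
  then show ?thesis unfolding in_relation_span_def by blast
qed

lemma in_relation_span_ncp_mult_right:
  assumes "a \<in> free_alg" "p \<in> free_alg" "in_relation_span p"
  shows "in_relation_span (ncp_mult p a)"
proof -
  obtain s t where p: "\<And>w. surviving w \<Longrightarrow> p w = s * rel_v w + t * rel_vi w"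
    using assms(3) by (auto simp: in_relation_span_def)
  have "ncp_mult p a w = 0 * rel_v w + (- s * a [Y]) * rel_vi w" if "surviving w" for w
  proof -
    have "ncp_mult p a w = (if length w = 7 then p (take 6 w) * a (drop 6 w) else 0)"
      using assms that
      by (intro ncp_mult_surviving_right) (simp_all add: free_alg_Nil in_relation_span_short)
    then show ?thesis
      using surviving_length_7[OF that] p[OF surviving_relation_words(3)] p[OF surviving_relation_words(4)]
      by (auto simp: rel_vi_apply rel_v_apply w1_def w2_def v1_def v2_def v3_def v4_def
          algebra_simps)
  qed
  then show ?thesis unfolding in_relation_span_def by blast
qed

lemma in_relation_span_mono: "\<not> surviving w \<Longrightarrow> in_relation_span (mono w)"
  unfolding in_relation_span_def by (rule exI[of _ 0], rule exI[of _ 0]) (auto simp: mono_def)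

lemma in_relation_span_rel_v: "in_relation_span rel_v"
  unfolding in_relation_span_def by (rule exI[of _ 1], rule exI[of _ 0]) simp

lemma in_relation_span_rel_vi: "in_relation_span rel_vi"
  unfolding in_relation_span_def by (rule exI[of _ 0], rule exI[of _ 1]) simp

lemma rel_v_in_free_alg: "rel_v \<in> free_alg"
  unfolding rel_v_def
  by (intro free_alg_add free_alg_diff free_alg_smult mono_in_free_alg) simp_all

lemma rel_vi_in_free_alg: "rel_vi \<in> free_alg"
  unfolding rel_vi_def
  by (intro free_alg_diff free_alg_smult mono_in_free_alg) (simp_all add: w1_def w2_def)

lemma gens_cases:
  assumes "g \<in> gens"
  obtains w where "g = mono w" "w \<noteq> []" "\<not> surviving w" | "g = rel_v" | "g = rel_vi"
proof -
  consider (mono) w where "g = mono w" "length w = 8 \<or> 2 < length (filter (\<lambda>g. g = X) w) \<or>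
      (length w = 7 \<and> w \<noteq> w1 \<and> w \<noteq> w2) \<or> (1 \<le> length w \<and> \<not> mdvd w w1 \<and> \<not> mdvd w w2)"
    | "g = rel_v" | "g = rel_vi"
    using assms unfolding gens_def by blast
  then show ?thesis
  proof cases
    case (mono w)
    have "\<not> surviving w"
    proof
      assume s: "surviving w"
      show False
        using mono(2) surviving_length[OF s] surviving_count_X[OF s] surviving_length_7[OF s] s
        by (auto simp: surviving_def)
    qed
    moreover have "w \<noteq> []" using mono(2) by auto
    ultimately show ?thesis using mono(1) that(1) by blast
  qed (use that in blast)+
qed

lemma I_ideal_in_relation_span: "p \<in> I_ideal \<Longrightarrow> p \<in> free_alg \<and> in_relation_span p"
  unfolding I_ideal_def
proof (induction rule: ideal_gen.induct)
  case (gen g)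
  then show ?case
    by (cases rule: gens_cases) (auto simp: in_relation_span_mono in_relation_span_rel_v
        in_relation_span_rel_vi rel_v_in_free_alg rel_vi_in_free_alg)
next
  case zero
  then show ?case by (simp add: ncp_zero_def in_relation_span_zero)
next
  case (add p q)
  then show ?case by (simp add: ncp_add_def free_alg_add in_relation_span_add)
next
  case (smult p c)
  then show ?case by (simp add: ncp_smult_def free_alg_smult in_relation_span_smult)
next
  case (lmult p a)
  then show ?case by (simp add: free_alg_ncp_mult in_relation_span_ncp_mult_left)
next
  case (rmult p a)
  then show ?case by (simp add: free_alg_ncp_mult in_relation_span_ncp_mult_right)
qed

lemma I_add: "p \<in> I_ideal \<Longrightarrow> q \<in> I_ideal \<Longrightarrow> (\<lambda>w. p w + q w) \<in> I_ideal"
  using ideal_gen.add[of p gens q] by (simp add: I_ideal_def ncp_add_def)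

lemma I_smult: "p \<in> I_ideal \<Longrightarrow> (\<lambda>w. c * p w) \<in> I_ideal"
  using ideal_gen.smult[of p gens c] by (simp add: I_ideal_def ncp_smult_def)

lemma I_zero: "(\<lambda>w. 0) \<in> I_ideal"
  using ideal_gen.zero[of gens] by (simp add: I_ideal_def ncp_zero_def)

lemma I_ncp_mult_left: "p \<in> I_ideal \<Longrightarrow> a \<in> free_alg \<Longrightarrow> ncp_mult a p \<in> I_ideal"
  unfolding I_ideal_def by (rule ideal_gen.lmult)

lemma I_ncp_mult_right: "p \<in> I_ideal \<Longrightarrow> a \<in> free_alg \<Longrightarrow> ncp_mult p a \<in> I_ideal"
  unfolding I_ideal_def by (rule ideal_gen.rmult)

lemma gens_in_I: "g \<in> gens \<Longrightarrow> g \<in> I_ideal"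
  unfolding I_ideal_def by (rule ideal_gen.gen)

lemma I_sum:
  assumes "finite S" "\<And>s. s \<in> S \<Longrightarrow> f s \<in> I_ideal"
  shows "(\<lambda>w. \<Sum>s\<in>S. f s w) \<in> I_ideal"
  using assms by (induction S rule: finite_induct) (simp_all add: I_zero I_add)

lemma mono_in_I:
  assumes "w \<noteq> []" "\<not> surviving w"
  shows "mono w \<in> I_ideal"
proof (cases "length w \<ge> 8")
  case True
  define u where "u = take (length w - 8) w"
  define v where "v = drop (length w - 8) w"
  have "length v = 8" using True by (simp add: v_def)
  then have "mono v \<in> gens" unfolding gens_def by blast
  then have "mono v \<in> I_ideal" by (rule gens_in_I)
  then have "u = [] \<or> ncp_mult (mono u) (mono v) \<in> I_ideal" by (auto intro: I_ncp_mult_left)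
  moreover have "w = u @ v" by (simp add: u_def v_def)
  ultimately show ?thesis using \<open>mono v \<in> I_ideal\<close> by (auto simp: ncp_mult_mono)
next
  case False
  have "w \<noteq> w1" "w \<noteq> w2" using assms(2) surviving_relation_words by auto
  moreover have "\<not> mdvd w w1" "\<not> mdvd w w2" using assms by (auto simp: surviving_def)
  moreover have "length w = 7 \<or> 1 \<le> length w \<and> length w < 7"
    using False assms(1) by (cases w) auto
  ultimately have "mono w \<in> gens" unfolding gens_def by blast
  then show ?thesis by (rule gens_in_I)
qed

lemma I_if_vanishes_on_surviving:
  assumes "p \<in> free_alg" "\<And>w. surviving w \<Longrightarrow> p w = 0"
  shows "p \<in> I_ideal"
proof -
  define S where "S = {w. p w \<noteq> 0}"
  have "finite S" using assms(1) by (simp add: S_def free_alg_def)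
  have "(\<lambda>u. \<Sum>w\<in>S. p w * mono w u) \<in> I_ideal"
  proof (rule I_sum[OF \<open>finite S\<close>])
    fix w assume "w \<in> S"
    then have "w \<noteq> []" "\<not> surviving w" using assms by (auto simp: S_def free_alg_def)
    then show "(\<lambda>u. p w * mono w u) \<in> I_ideal" by (intro I_smult mono_in_I)
  qed
  moreover have "(\<Sum>w\<in>S. p w * mono w u) = p u" for u
  proof -
    have "(\<Sum>w\<in>S. p w * mono w u) = (\<Sum>w\<in>S. if w = u then p u else 0)"
      by (rule sum.cong) (auto simp: mono_def)
    then show ?thesis using \<open>finite S\<close> by (cases "p u = 0") (simp_all add: S_def)
  qed
  ultimately show ?thesis by simp
qed

lemma in_relation_span_imp_I_ideal:
  assumes "p \<in> free_alg" "in_relation_span p"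
  shows "p \<in> I_ideal"
proof -
  obtain s t where p: "\<And>w. surviving w \<Longrightarrow> p w = s * rel_v w + t * rel_vi w"
    using assms(2) by (auto simp: in_relation_span_def)
  have "(\<lambda>w. p w - (s * rel_v w + t * rel_vi w)) \<in> I_ideal"
    using assms(1) rel_v_in_free_alg rel_vi_in_free_alg p
    by (intro I_if_vanishes_on_surviving free_alg_diff free_alg_add free_alg_smult) simp_all
  moreover have "rel_v \<in> I_ideal" "rel_vi \<in> I_ideal" by (simp_all add: gens_in_I gens_def)
  ultimately have "(\<lambda>w. (p w - (s * rel_v w + t * rel_vi w)) + (s * rel_v w + t * rel_vi w)) \<in> I_ideal"
    by (intro I_add I_smult)
  then show ?thesis by simp
qed

lemma I_ideal_iff: "p \<in> I_ideal \<longleftrightarrow> p \<in> free_alg \<and> in_relation_span p"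
  using I_ideal_in_relation_span in_relation_span_imp_I_ideal by blast
section \<open>The ring \<open>B\<^sub>1\<close>\<close>

type_synonym 'a hull_elem = "('a \<times> 'a ncpoly) set"

lemma hull_reps_iff: "(a, p) \<in> hull_reps \<longleftrightarrow> p \<in> free_alg"
  by (simp add: hull_reps_def)

lemma hull_rel_iff:
  "((a, p), (b, q)) \<in> hull_rel \<longleftrightarrow>
     p \<in> free_alg \<and> q \<in> free_alg \<and> a = b \<and> (\<lambda>w. p w - q w) \<in> I_ideal"
  by (simp add: hull_rel_def hull_reps_def ncp_add_def ncp_smult_def)

lemma equiv_hull_rel: "equiv hull_reps (hull_rel :: (('a::field \<times> 'a ncpoly) \<times> _) set)"
proof (rule equivI)
  show "refl_on hull_reps (hull_rel :: (('a \<times> 'a ncpoly) \<times> _) set)"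
    by (rule refl_onI) (auto simp: hull_rel_def hull_reps_def ncp_add_def ncp_smult_def I_zero)
  show "sym (hull_rel :: (('a \<times> 'a ncpoly) \<times> _) set)"
  proof (rule symI)
    fix r s :: "'a \<times> 'a ncpoly" assume rs: "(r, s) \<in> hull_rel"
    obtain a p where r: "r = (a, p)" by (cases r)
    obtain b q where s: "s = (b, q)" by (cases s)
    have "(\<lambda>w. -1 * (p w - q w)) \<in> I_ideal" using rs by (intro I_smult) (simp add: r s hull_rel_iff)
    then have "(\<lambda>w. q w - p w) \<in> I_ideal" by simp
    with rs show "(s, r) \<in> hull_rel" by (simp add: r s hull_rel_iff)
  qed
  show "trans (hull_rel :: (('a \<times> 'a ncpoly) \<times> _) set)"
  proof (rule transI)
    fix r s t :: "'a \<times> 'a ncpoly" assume rs: "(r, s) \<in> hull_rel" and st: "(s, t) \<in> hull_rel"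
    obtain a p where r: "r = (a, p)" by (cases r)
    obtain b q where s: "s = (b, q)" by (cases s)
    obtain c u where t: "t = (c, u)" by (cases t)
    have "(\<lambda>w. (p w - q w) + (q w - u w)) \<in> I_ideal"
      using rs st by (intro I_add) (simp_all add: r s t hull_rel_iff)
    then have "(\<lambda>w. p w - u w) \<in> I_ideal" by (simp add: algebra_simps)
    with rs st show "(r, t) \<in> hull_rel" by (simp add: r s t hull_rel_iff)
  qed
  show "(hull_rel :: (('a \<times> 'a ncpoly) \<times> _) set) \<subseteq> hull_reps \<times> hull_reps"
    by (auto simp: hull_rel_def)
qed

definition hull_class :: "'a::field \<times> 'a ncpoly \<Rightarrow> 'a hull_elem" where
  "hull_class r = hull_rel `` {r}"

lemma hull_class_eq_iff:
  "p \<in> free_alg \<Longrightarrow> q \<in> free_alg \<Longrightarrow>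
     hull_class (a, p) = hull_class (b, q) \<longleftrightarrow> a = b \<and> (\<lambda>w. p w - q w) \<in> I_ideal"
  unfolding hull_class_def
  by (subst eq_equiv_class_iff[OF equiv_hull_rel]) (simp_all add: hull_reps_iff hull_rel_iff)

lemma hull_class_eqI: "(r, s) \<in> hull_rel \<Longrightarrow> hull_class r = hull_class s"
  unfolding hull_class_def by (rule equiv_class_eq[OF equiv_hull_rel])

lemma carrier_B1: "carrier B1 = hull_class ` hull_reps"
  by (auto simp: B1_def quotient_def hull_class_def)

lemma hull_class_in_carrier: "p \<in> free_alg \<Longrightarrow> hull_class (a, p) \<in> carrier B1"
  by (simp add: carrier_B1 hull_reps_iff)

lemma carrier_B1E:
  assumes "x \<in> carrier B1"
  obtains a p where "p \<in> free_alg" "x = hull_class (a, p)"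
  using assms by (auto simp: carrier_B1 hull_reps_def)

lemma hull_class_lift:
  assumes cong: "\<And>r r' s s'. (r, r') \<in> hull_rel \<Longrightarrow> (s, s') \<in> hull_rel \<Longrightarrow> (f r s, f r' s') \<in> hull_rel"
    and "r \<in> hull_reps" "s \<in> hull_reps"
  shows "(\<Union>r'\<in>hull_class r. \<Union>s'\<in>hull_class s. hull_rel `` {f r' s'}) = hull_class (f r s)"
proof -
  have r: "r \<in> hull_class r" and s: "s \<in> hull_class s"
    using assms(2,3) equiv_class_self[OF equiv_hull_rel] by (simp_all add: hull_class_def)
  have eq: "hull_rel `` {f r' s'} = hull_class (f r s)"
    if "r' \<in> hull_class r" "s' \<in> hull_class s" for r' s'
  proof -
    have "(f r s, f r' s') \<in> hull_rel" using that cong by (simp add: hull_class_def)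
    then show ?thesis by (metis hull_class_def hull_class_eqI)
  qed
  show ?thesis
  proof
    show "(\<Union>r'\<in>hull_class r. \<Union>s'\<in>hull_class s. hull_rel `` {f r' s'}) \<subseteq> hull_class (f r s)"
      by (intro UN_least) (simp add: eq)
    show "hull_class (f r s) \<subseteq> (\<Union>r'\<in>hull_class r. \<Union>s'\<in>hull_class s. hull_rel `` {f r' s'})"
      by (rule subsetI, rule UN_I[OF r], rule UN_I[OF s]) (simp add: eq[OF r s])
  qed
qed

lemma hull_add_cong:
  assumes "(r, r') \<in> hull_rel" "(s, s') \<in> hull_rel"
  shows "(hull_add r s, hull_add r' s') \<in> hull_rel"
proof -
  obtain a p a' p' b q b' q' where "r = (a, p)" "r' = (a', p')" "s = (b, q)" "s' = (b', q')"
    by (cases r, cases r', cases s, cases s')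
  with assms show ?thesis
    using I_add[of "\<lambda>w. p w - p' w" "\<lambda>w. q w - q' w"]
    by (auto simp: hull_rel_iff hull_add_def ncp_add_def free_alg_add algebra_simps)
qed

lemma hull_mult_cong:
  assumes "(r, r') \<in> hull_rel" "(s, s') \<in> hull_rel"
  shows "(hull_mult r s, hull_mult r' s') \<in> hull_rel"
proof -
  obtain a p a' p' b q b' q' where rs: "r = (a, p)" "r' = (a', p')" "s = (b, q)" "s' = (b', q')"
    by (cases r, cases r', cases s, cases s')
  have eq: "a' = a" "b' = b" and free: "p \<in> free_alg" "p' \<in> free_alg" "q \<in> free_alg" "q' \<in> free_alg"
    and diff: "(\<lambda>w. p w - p' w) \<in> I_ideal" "(\<lambda>w. q w - q' w) \<in> I_ideal"
    using assms by (auto simp: hull_rel_iff rs)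
  have "(\<lambda>w. (a * (q w - q' w) + b * (p w - p' w)) +
      (ncp_mult (\<lambda>w. p w - p' w) q w + ncp_mult p' (\<lambda>w. q w - q' w) w)) \<in> I_ideal"
    using diff free by (intro I_add I_smult I_ncp_mult_left I_ncp_mult_right)
  then show ?thesis
    using free by (simp add: hull_rel_iff rs eq hull_mult_def ncp_add_def ncp_smult_def
        free_alg_add free_alg_smult free_alg_ncp_mult ncp_mult_diff_left ncp_mult_diff_right
        algebra_simps)
qed

lemma B1_mult_class:
  "p \<in> free_alg \<Longrightarrow> q \<in> free_alg \<Longrightarrow>
     hull_class (a, p) \<otimes>\<^bsub>B1\<^esub> hull_class (b, q) =
     hull_class (a * b, \<lambda>w. a * q w + b * p w + ncp_mult p q w)"
  using hull_class_lift[where f = hull_mult and r = "(a, p)" and s = "(b, q)", OF hull_mult_cong]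
  by (simp add: B1_def hull_class_def hull_reps_iff hull_mult_def ncp_add_def ncp_smult_def)

lemma B1_add_class:
  "p \<in> free_alg \<Longrightarrow> q \<in> free_alg \<Longrightarrow>
     hull_class (a, p) \<oplus>\<^bsub>B1\<^esub> hull_class (b, q) = hull_class (a + b, \<lambda>w. p w + q w)"
  using hull_class_lift[where f = hull_add and r = "(a, p)" and s = "(b, q)", OF hull_add_cong]
  by (simp add: B1_def hull_class_def hull_reps_iff hull_add_def ncp_add_def)

lemma B1_zero: "\<zero>\<^bsub>B1\<^esub> = hull_class (0, \<lambda>w. 0)"
  by (simp add: B1_def hull_class_def ncp_zero_def)

lemma B1_one: "\<one>\<^bsub>B1\<^esub> = hull_class (1, \<lambda>w. 0)"
  by (simp add: B1_def hull_class_def ncp_zero_def)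

lemma free_alg_hull_mult:
  "p \<in> free_alg \<Longrightarrow> q \<in> free_alg \<Longrightarrow> (\<lambda>w. a * q w + b * p w + ncp_mult p q w) \<in> free_alg"
  by (intro free_alg_add free_alg_smult free_alg_ncp_mult)

lemma ring_B1: "ring (B1 :: 'a::field hull_elem ring)"
proof (rule ringI)
  show "abelian_group (B1 :: 'a hull_elem ring)"
  proof (rule abelian_groupI)
    fix x :: "'a hull_elem" assume "x \<in> carrier B1"
    then obtain a p where p: "p \<in> free_alg" "x = hull_class (a, p)" by (rule carrier_B1E)
    then have "hull_class (- a, \<lambda>w. - p w) \<oplus>\<^bsub>B1\<^esub> x = \<zero>\<^bsub>B1\<^esub>"
      by (simp add: B1_add_class free_alg_uminus B1_zero)
    then show "\<exists>y\<in>carrier B1. y \<oplus>\<^bsub>B1\<^esub> x = \<zero>\<^bsub>B1\<^esub>"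
      using p by (blast intro: hull_class_in_carrier free_alg_uminus)
  qed (auto elim!: carrier_B1E
      simp: B1_add_class free_alg_add B1_zero hull_class_in_carrier ac_simps)
next
  show "monoid (B1 :: 'a hull_elem ring)"
  proof (rule monoidI)
    fix x y z :: "'a hull_elem"
    assume "x \<in> carrier B1" "y \<in> carrier B1" "z \<in> carrier B1"
    then show "x \<otimes>\<^bsub>B1\<^esub> y \<otimes>\<^bsub>B1\<^esub> z = x \<otimes>\<^bsub>B1\<^esub> (y \<otimes>\<^bsub>B1\<^esub> z)"
      by (elim carrier_B1E) (simp only: B1_mult_class free_alg_hull_mult,
          rule arg_cong[where f = hull_class], simp_all add: ncp_mult_linear algebra_simps)
  qed (auto elim!: carrier_B1E simp: B1_mult_class free_alg_hull_mult B1_one hull_class_in_carrier)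
next
  fix x y z :: "'a hull_elem"
  assume "x \<in> carrier B1" "y \<in> carrier B1" "z \<in> carrier B1"
  then show "(x \<oplus>\<^bsub>B1\<^esub> y) \<otimes>\<^bsub>B1\<^esub> z = x \<otimes>\<^bsub>B1\<^esub> z \<oplus>\<^bsub>B1\<^esub> y \<otimes>\<^bsub>B1\<^esub> z"
    by (elim carrier_B1E) (simp only: B1_mult_class B1_add_class free_alg_hull_mult free_alg_add,
        rule arg_cong[where f = hull_class], simp_all add: ncp_mult_linear algebra_simps)
next
  fix x y z :: "'a hull_elem"
  assume "x \<in> carrier B1" "y \<in> carrier B1" "z \<in> carrier B1"
  then show "z \<otimes>\<^bsub>B1\<^esub> (x \<oplus>\<^bsub>B1\<^esub> y) = z \<otimes>\<^bsub>B1\<^esub> x \<oplus>\<^bsub>B1\<^esub> z \<otimes>\<^bsub>B1\<^esub> y"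
    by (elim carrier_B1E) (simp only: B1_mult_class B1_add_class free_alg_hull_mult free_alg_add,
        rule arg_cong[where f = hull_class], simp_all add: ncp_mult_linear algebra_simps)
qed

interpretation B1: ring B1
  by (rule ring_B1)

lemma B1_minus_class:
  "p \<in> free_alg \<Longrightarrow> \<ominus>\<^bsub>B1\<^esub> hull_class (a, p) = hull_class (- a, \<lambda>w. - p w)"
  by (intro B1.minus_equality)
    (simp_all add: B1_add_class B1_zero hull_class_in_carrier free_alg_uminus)

section \<open>The Lie algebra \<open>[B\<^sub>1]\<close> is 5-Engel\<close>

definition ncp_bracket :: "'a::field ncpoly \<Rightarrow> 'a ncpoly \<Rightarrow> 'a ncpoly" where
  "ncp_bracket p q = (\<lambda>w. ncp_mult p q w - ncp_mult q p w)"

fun ncp_bracket_iter :: "nat \<Rightarrow> 'a::field ncpoly \<Rightarrow> 'a ncpoly \<Rightarrow> 'a ncpoly" where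
  "ncp_bracket_iter 0 p q = p"
| "ncp_bracket_iter (Suc k) p q = ncp_bracket (ncp_bracket_iter k p q) q"

lemma ncp_bracket_iter_Suc_apply:
  "ncp_bracket_iter (Suc k) p q w =
     ncp_mult (ncp_bracket_iter k p q) q w - ncp_mult q (ncp_bracket_iter k p q) w"
  by (simp add: ncp_bracket_def)

lemma free_alg_ncp_bracket_iter:
  "p \<in> free_alg \<Longrightarrow> q \<in> free_alg \<Longrightarrow> ncp_bracket_iter k p q \<in> free_alg"
  by (induction k) (simp_all add: ncp_bracket_def free_alg_closed)

lemma ncp_bracket_iter_vanishes_below:
  assumes "p [] = 0" "q [] = 0"
  shows "vanishes_below (Suc k) (ncp_bracket_iter k p q)"
proof (induction k)
  case 0
  then show ?case using assms(1) by (simp add: vanishes_below_def)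
next
  case (Suc k)
  have q: "vanishes_below 1 q" using assms(2) by (simp add: vanishes_below_def)
  show ?case
    using vanishes_below_ncp_mult[OF Suc q] vanishes_below_ncp_mult[OF q Suc]
    by (simp add: ncp_bracket_def vanishes_below_def)
qed

lemma ncp_bracket_iter_short:
  "p [] = 0 \<Longrightarrow> q [] = 0 \<Longrightarrow> length w \<le> k \<Longrightarrow> ncp_bracket_iter k p q w = 0"
  using ncp_bracket_iter_vanishes_below[of p q k] by (simp add: vanishes_below_def)

lemma B1_lie_bracket_class:
  assumes "p \<in> free_alg" "q \<in> free_alg"
  shows "lie_bracket B1 (hull_class (a, p)) (hull_class (b, q)) = hull_class (0, ncp_bracket p q)"
proof -
  have "lie_bracket B1 (hull_class (a, p)) (hull_class (b, q)) =
      hull_class (a * b + - (b * a),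
        \<lambda>w. (a * q w + b * p w + ncp_mult p q w) + - (b * p w + a * q w + ncp_mult q p w))"
    using assms by (simp add: lie_bracket_def B1.minus_eq B1_mult_class B1_minus_class
        B1_add_class free_alg_closed)
  also have "\<dots> = hull_class (0, ncp_bracket p q)"
    by (rule arg_cong[where f = hull_class]) (auto simp: ncp_bracket_def algebra_simps)
  finally show ?thesis .
qed

lemma B1_lie_iter_class:
  assumes "p \<in> free_alg" "q \<in> free_alg"
  shows "lie_iter B1 (Suc k) (hull_class (a, p)) (hull_class (b, q)) =
    hull_class (0, ncp_bracket_iter (Suc k) p q)"
proof (induction k)
  case 0
  then show ?case using B1_lie_bracket_class[OF assms] by simp
next
  case (Suc k)
  then show ?case
    using B1_lie_bracket_class[OF free_alg_ncp_bracket_iter[OF assms, of "Suc k"] assms(2)] by simp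
qed

lemma ncp_bracket_iter_5_coeffs:
  fixes p q :: "'a::field ncpoly"
  assumes p: "p [] = 0" and q: "q [] = 0"
  defines "d \<equiv> q [X] * q [Y] ^ 3 * (p [X] * q [Y] - p [Y] * q [X])"
    and "e \<equiv> q [X] * q [Y] ^ 3 * (q [Y] * (p [Y, X] - p [X, Y]) + p [Y] * (q [X, Y] - q [Y, X]))"
  shows "ncp_bracket_iter 5 p q v1 = 6 * d" "ncp_bracket_iter 5 p q v2 = -15 * d"
    "ncp_bracket_iter 5 p q v3 = -6 * d" "ncp_bracket_iter 5 p q v4 = 15 * d"
    "ncp_bracket_iter 5 p q w1 = 6 * e" "ncp_bracket_iter 5 p q w2 = -15 * e"
  unfolding d_def e_def v1_def v2_def v3_def v4_def w1_def w2_def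
  by (simp_all add: numeral_eq_Suc ncp_bracket_iter_Suc_apply ncp_mult_Cons p q
        ncp_bracket_iter_short del: ncp_bracket_iter.simps(2))
    (simp_all add: algebra_simps)

lemma in_relation_span_ncp_bracket_iter_5:
  assumes "p [] = 0" "q [] = 0"
  shows "in_relation_span (ncp_bracket_iter 5 p q)"
proof -
  note coeffs = ncp_bracket_iter_5_coeffs[of p q, OF assms]
  let ?d = "q [X] * q [Y] ^ 3 * (p [X] * q [Y] - p [Y] * q [X])"
    and ?e = "q [X] * q [Y] ^ 3 * (q [Y] * (p [Y, X] - p [X, Y]) + p [Y] * (q [X, Y] - q [Y, X]))"
  have "ncp_bracket_iter 5 p q w = (3 * ?d) * rel_v w + (3 * ?e) * rel_vi w"
    if s: "surviving w" for w
  proof -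
    consider "length w \<le> 5" | "w \<in> {v1, v2, v3, v4}" | "w \<in> {w1, w2}"
      using surviving_length[OF s] surviving_length_6[OF s] surviving_length_7[OF s]
      by linarith
    then show ?thesis
      by cases (auto simp: assms ncp_bracket_iter_short rel_v_short rel_vi_short coeffs
          rel_v_rel_vi_coeffs algebra_simps)
  qed
  then show ?thesis unfolding in_relation_span_def by blast
qed

lemma lie_engel_B1: "lie_engel (B1 :: 'a::field hull_elem ring) 5"
  unfolding lie_engel_def
proof (intro ballI)
  fix u v :: "'a hull_elem" assume "u \<in> carrier B1" "v \<in> carrier B1"
  then obtain a p b q where free: "p \<in> free_alg" "q \<in> free_alg"
    and uv: "u = hull_class (a, p)" "v = hull_class (b, q)"
    by (metis carrier_B1E)
  have "lie_iter B1 5 u v = hull_class (0, ncp_bracket_iter 5 p q)"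
    using B1_lie_iter_class[OF free, where k = 4] by (simp add: uv)
  also have "\<dots> = hull_class (0, \<lambda>w. 0)"
    using free free_alg_ncp_bracket_iter[OF free, of 5]
      in_relation_span_ncp_bracket_iter_5[of p q, OF free_alg_Nil[OF free(1)] free_alg_Nil[OF free(2)]]
    by (simp add: hull_class_eq_iff I_ideal_iff)
  finally show "lie_iter B1 5 u v = \<zero>\<^bsub>B1\<^esub>" by (simp add: B1_zero)
qed

section \<open>The group \<open>U(B\<^sub>1)\<close> is not 5-Engel\<close>

lemma (in group) grp_comm_closed:
  "a \<in> carrier G \<Longrightarrow> b \<in> carrier G \<Longrightarrow> grp_comm G a b \<in> carrier G"
  by (simp add: grp_comm_def)

lemma (in group) inv_grp_comm:
  "a \<in> carrier G \<Longrightarrow> b \<in> carrier G \<Longrightarrow> inv (grp_comm G a b) = grp_comm G b a"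
  by (simp add: grp_comm_def inv_mult_group m_assoc)

text \<open>A list of (word, integer) pairs stands for the element \<open>1 + \<Sum> c \<cdot> w\<close> of \<open>B\<^sub>1\<close>; products
  of such elements are computed by evaluation, keeping only the surviving words.\<close>

type_synonym sparse_poly = "(gen list \<times> int) list"

definition coeff :: "sparse_poly \<Rightarrow> gen list \<Rightarrow> int" where
  "coeff a w = (if w = [] then 0 else case map_of a w of None \<Rightarrow> 0 | Some c \<Rightarrow> c)"

definition unipotent :: "sparse_poly \<Rightarrow> 'a::field hull_elem" where
  "unipotent a = hull_class (1, \<lambda>w. of_int (coeff a w))"

definition unipotent_mult ::
    "sparse_poly \<Rightarrow> sparse_poly \<Rightarrow> sparse_poly" where
  "unipotent_mult a b = map (\<lambda>w. (w, coeff a w + coeff b w +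
      (\<Sum>i\<leftarrow>[0..<Suc (length w)]. coeff a (take i w) * coeff b (drop i w)))) surviving_words"

lemma coeff_Nil [simp]: "coeff [] w = 0"
  by (simp add: coeff_def)

lemma coeff_empty_word [simp]: "coeff a [] = 0"
  by (simp add: coeff_def)

lemma coeff_map_pair:
  "w \<in> set ws \<Longrightarrow> w \<noteq> [] \<Longrightarrow> coeff (map (\<lambda>u. (u, f u)) ws) w = f w"
  by (simp add: coeff_def map_of_map_restrict)

lemma coeff_unipotent_mult:
  assumes "surviving w"
  shows "coeff (unipotent_mult a b) w =
    coeff a w + coeff b w + (\<Sum>i\<le>length w. coeff a (take i w) * coeff b (drop i w))"
proof -
  have "w \<in> set surviving_words" "w \<noteq> []"
    using assms by (simp_all add: surviving_def flip: surviving_iff_mem)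
  then have "coeff (unipotent_mult a b) w = coeff a w + coeff b w +
      (\<Sum>i\<leftarrow>[0..<Suc (length w)]. coeff a (take i w) * coeff b (drop i w))"
    unfolding unipotent_mult_def by (rule coeff_map_pair)
  then show ?thesis by (simp only: atMost_upto interv_sum_list_conv_sum_set_nat)
qed

lemma free_alg_coeff: "(\<lambda>w. of_int (coeff a w) :: 'a::field) \<in> free_alg"
proof -
  have "{w. (of_int (coeff a w) :: 'a) \<noteq> 0} \<subseteq> fst ` set a"
    by (auto simp: coeff_def split: option.splits dest: map_of_SomeD intro: rev_image_eqI)
  then have "finite {w. (of_int (coeff a w) :: 'a) \<noteq> 0}" by (rule finite_subset) simp
  then show ?thesis by (simp add: free_alg_def)
qed

lemma unipotent_eqI:
  assumes "\<And>w. surviving w \<Longrightarrow> coeff a w = coeff b w"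
  shows "unipotent a = unipotent b"
  unfolding unipotent_def using assms
  by (subst hull_class_eq_iff) (auto simp: free_alg_coeff free_alg_diff
      intro: I_if_vanishes_on_surviving)

lemma unipotent_eq_imp_in_relation_span:
  "(unipotent a :: 'a::field hull_elem) = unipotent b \<Longrightarrow>
     in_relation_span (\<lambda>w. of_int (coeff a w) - (of_int (coeff b w) :: 'a))"
  unfolding unipotent_def by (subst (asm) hull_class_eq_iff) (simp_all add: free_alg_coeff I_ideal_iff)

lemma unipotent_Nil: "unipotent [] = \<one>\<^bsub>B1\<^esub>"
  by (simp add: unipotent_def B1_one)

lemma unipotent_in_carrier: "unipotent a \<in> carrier B1"
  by (simp add: unipotent_def hull_class_in_carrier free_alg_coeff)

lemma unipotent_mult:
  "unipotent a \<otimes>\<^bsub>B1\<^esub> unipotent b = (unipotent (unipotent_mult a b) :: 'a::field hull_elem)"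
proof -
  have "(\<lambda>w. of_int (coeff b w) + of_int (coeff a w)
      + ncp_mult (\<lambda>w. of_int (coeff a w)) (\<lambda>w. of_int (coeff b w)) w
      - of_int (coeff (unipotent_mult a b) w)) \<in> (I_ideal :: 'a::field ncpoly set)"
    by (intro I_if_vanishes_on_surviving free_alg_diff free_alg_add free_alg_ncp_mult free_alg_coeff)
      (simp add: coeff_unipotent_mult ncp_mult_def)
  then show ?thesis
    by (simp add: unipotent_def B1_mult_class free_alg_coeff free_alg_closed hull_class_eq_iff)
qed

definition inverse_pair :: "sparse_poly \<Rightarrow> sparse_poly \<Rightarrow> bool" where
  "inverse_pair a b \<longleftrightarrow>
     (\<forall>w\<in>set surviving_words. coeff (unipotent_mult a b) w = 0 \<and> coeff (unipotent_mult b a) w = 0)"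

lemma inverse_pair_units:
  assumes "inverse_pair a b"
  shows "(unipotent a :: 'a::field hull_elem) \<in> carrier (units_of B1)"
    and "inv\<^bsub>units_of B1\<^esub> (unipotent a :: 'a hull_elem) = unipotent b"
proof -
  have ab: "unipotent a \<otimes>\<^bsub>B1\<^esub> unipotent b = (\<one>\<^bsub>B1\<^esub> :: 'a hull_elem)"
    and ba: "unipotent b \<otimes>\<^bsub>B1\<^esub> unipotent a = (\<one>\<^bsub>B1\<^esub> :: 'a hull_elem)"
    using assms unfolding unipotent_mult unipotent_Nil[symmetric]
    by (auto intro!: unipotent_eqI simp: inverse_pair_def surviving_iff_mem)
  then show units: "(unipotent a :: 'a hull_elem) \<in> carrier (units_of B1)"
    by (auto simp: units_of_carrier Units_def unipotent_in_carrier intro!: bexI[of _ "unipotent b"])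
  show "inv\<^bsub>units_of B1\<^esub> (unipotent a :: 'a hull_elem) = unipotent b"
    using B1.inv_char[OF unipotent_in_carrier unipotent_in_carrier ab ba] units
    by (simp add: units_of_carrier B1.units_of_inv)
qed

text \<open>Commutators are computed on pairs of an element and its inverse: the inverse of
  \<open>(g, v)\<close> is \<open>(v, g)\<close>.\<close>

definition unipotent_comm ::
    "sparse_poly \<times> sparse_poly \<Rightarrow> sparse_poly \<times> sparse_poly
      \<Rightarrow> sparse_poly \<times> sparse_poly" where
  "unipotent_comm g v =
     (unipotent_mult (unipotent_mult (unipotent_mult (snd g) (snd v)) (fst g)) (fst v),
      unipotent_mult (unipotent_mult (unipotent_mult (snd v) (snd g)) (fst v)) (fst g))"

fun unipotent_comm_iter ::
    "nat \<Rightarrow> sparse_poly \<times> sparse_poly \<Rightarrow> sparse_poly \<times> sparse_poly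
      \<Rightarrow> sparse_poly \<times> sparse_poly" where
  "unipotent_comm_iter 0 g v = g"
| "unipotent_comm_iter (Suc k) g v = unipotent_comm (unipotent_comm_iter k g v) v"

lemma grp_comm_iter_unipotent:
  assumes "(unipotent (fst g) :: 'a::field hull_elem) \<in> carrier (units_of B1)"
      "inv\<^bsub>units_of B1\<^esub> (unipotent (fst g) :: 'a hull_elem) = unipotent (snd g)"
    and "(unipotent (fst v) :: 'a hull_elem) \<in> carrier (units_of B1)"
      "inv\<^bsub>units_of B1\<^esub> (unipotent (fst v) :: 'a hull_elem) = unipotent (snd v)"
  shows "grp_comm_iter (units_of B1) k (unipotent (fst g) :: 'a hull_elem) (unipotent (fst v)) =
      unipotent (fst (unipotent_comm_iter k g v)) \<and>
    (unipotent (fst (unipotent_comm_iter k g v)) :: 'a hull_elem) \<in> carrier (units_of B1) \<and>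
    inv\<^bsub>units_of B1\<^esub> (unipotent (fst (unipotent_comm_iter k g v)) :: 'a hull_elem) =
      unipotent (snd (unipotent_comm_iter k g v))"
proof (induction k)
  case 0
  then show ?case using assms(1,2) by simp
next
  case (Suc k)
  interpret U: group "units_of (B1 :: 'a hull_elem ring)" by (rule B1.units_group)
  let ?h = "unipotent (fst (unipotent_comm_iter k g v)) :: 'a hull_elem"
    and ?v = "unipotent (fst v) :: 'a hull_elem"
  have h: "?h \<in> carrier (units_of B1)"
      "inv\<^bsub>units_of B1\<^esub> ?h = unipotent (snd (unipotent_comm_iter k g v))"
    using Suc by simp_all
  have iter: "grp_comm_iter (units_of B1) (Suc k) (unipotent (fst g)) ?v = grp_comm (units_of B1) ?h ?v"
    using Suc by simp
  have comm: "grp_comm (units_of B1) ?h ?v = unipotent (fst (unipotent_comm_iter (Suc k) g v))"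
    using h assms(4) by (simp add: grp_comm_def units_of_mult unipotent_mult unipotent_comm_def)
  have "inv\<^bsub>units_of B1\<^esub> (grp_comm (units_of B1) ?h ?v) = grp_comm (units_of B1) ?v ?h"
    using h assms(3) by (simp add: U.inv_grp_comm)
  also have "\<dots> = unipotent (snd (unipotent_comm_iter (Suc k) g v))"
    using h assms(4) by (simp add: grp_comm_def units_of_mult unipotent_mult unipotent_comm_def)
  finally show ?case
    unfolding iter comm[symmetric] using U.grp_comm_closed[OF h(1) assms(3)] by blast
qed

definition x_pair :: "sparse_poly \<times> sparse_poly" where
  "x_pair = ([([X], 1)], [([X], -1)])"

definition y_pair :: "sparse_poly \<times> sparse_poly" where
  "y_pair = ([([Y], 1)], [([Y], -1), ([Y, Y], 1), ([Y, Y, Y], -1)])"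

lemma inverse_pair_x: "inverse_pair (fst x_pair) (snd x_pair)"
  by code_simp

lemma inverse_pair_y: "inverse_pair (fst y_pair) (snd y_pair)"
  by code_simp

text \<open>The computation gives \<open>(1 + x, 1 + y, \<dots>, 1 + y) = 1 + 6 y\<^sup>2xyxy\<^sup>2\<close> (five times \<open>1 + y\<close>).\<close>

lemma coeff_unipotent_comm_iter_5:
  "coeff (fst (unipotent_comm_iter 5 x_pair y_pair)) w1 = 0"
  "coeff (fst (unipotent_comm_iter 5 x_pair y_pair)) w2 = 6"
  by code_simp+

lemma not_group_engel_B1:
  assumes "(2::'a::field) \<noteq> 0" "(3::'a) \<noteq> 0"
  shows "\<not> group_engel (units_of (B1 :: 'a hull_elem ring)) 5"
proof
  let ?r = "fst (unipotent_comm_iter 5 x_pair y_pair)"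
  assume "group_engel (units_of (B1 :: 'a hull_elem ring)) 5"
  moreover note units = inverse_pair_units[OF inverse_pair_x] inverse_pair_units[OF inverse_pair_y]
  ultimately have "grp_comm_iter (units_of B1) 5 (unipotent (fst x_pair)) (unipotent (fst y_pair)) =
      (\<one>\<^bsub>units_of B1\<^esub> :: 'a hull_elem)"
    unfolding group_engel_def by blast
  then have "(unipotent ?r :: 'a hull_elem) = unipotent []"
    using conjunct1[OF grp_comm_iter_unipotent[OF units, of 5]]
    by (metis units_of_one unipotent_Nil)
  then obtain s t :: 'a
    where st: "\<And>w. surviving w \<Longrightarrow> of_int (coeff ?r w) = s * rel_v w + t * rel_vi w"
    by (auto dest!: unipotent_eq_imp_in_relation_span simp: in_relation_span_def)
  have "(0::'a) = t * 2" "(6::'a) = t * -5"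
    using st[OF surviving_relation_words(5)] st[OF surviving_relation_words(6)]
    by (simp_all add: coeff_unipotent_comm_iter_5 rel_v_rel_vi_coeffs)
  then have "(2::'a) * 3 = 0" using assms(1) by simp
  with assms show False by (metis mult_eq_0_iff)
qed

theorem corollary1p3:
  assumes "(2::'a::field) \<noteq> 0" and "(3::'a) \<noteq> 0"
  shows "lie_engel (B1 :: ('a \<times> 'a ncpoly) set ring) 5
         \<and> \<not> group_engel (units_of (B1 :: ('a \<times> 'a ncpoly) set ring)) 5"
  using lie_engel_B1 not_group_engel_B1[OF assms] by blast

end
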